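(* Let $\Omega\subset\mathbb{R}^N$ be a bounded domain with Lipschitz boundary, $s\in(0,1)$, $p\in(1,+\infty)$. For $\delta>0$ define $\mathcal{J}_{\delta,s,p}:L^p(\Omega)\to[0,+\infty]$ by $\mathcal{J}_{\delta,s,p}(u)=[u]_{W^{\delta,s,p}(\Omega_{\delta})}^p$ (with $u$ extended by zero outside $\Omega$). Then, with respect to the strong topology of $L^p(\Omega)$, $\mathcal{J}_{\delta,s,p}$ $\Gamma$-converges as $\delta\to+\infty$ to $\mathcal{J}_{\infty,s,p}(u)=[u]_{W^{s,p}(\mathbb{R}^N)}^p$ (with $u$ extended by zero outside $\Omega$), for all $u\in L^p(\Omega)$.
   Context: Here $\partial_\delta\Omega=\{y\in\mathbb{R}^N\setminus\Omega: |x-y|<\delta \text{ for some } x\in\Omega\}$, $\Omega_\delta=\Omega\cup\partial_\delta\Omega$, $[u]_{W^{\delta,s,p}(\Omega_{\delta})}^p=\int_{\Omega_{\delta}}\int_{\Omega_{\delta}\cap B(x,\delta)}\frac{|u(x)-u(y)|^p}{|x-y|^{N+sp}}dydx$ and $[u]_{W^{s,p}(\mathbb{R}^N)}^p=\int_{\mathbb{R}^N}\int_{\mathbb{R}^N}\frac{|u(x)-u(y)|^p}{|x-y|^{N+sp}}dydx$, both possibly $+\infty$. *)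

theory Defs
  imports "HOL-Analysis.Analysis"
begin

text \<open>Bounded Lipschitz domain: open, connected, bounded, and near every boundary
point the set lies (after choosing a unit direction e, i.e. a rotation of
coordinates) strictly below the graph of a Lipschitz function of the
coordinates orthogonal to e.\<close>
definition lipschitz_boundary :: "'a::euclidean_space set \<Rightarrow> bool" where
  "lipschitz_boundary \<Omega> \<longleftrightarrow>
     (\<forall>x\<in>frontier \<Omega>. \<exists>r>0. \<exists>e::'a. \<exists>L. \<exists>g::'a \<Rightarrow> real.
        norm e = 1 \<and> L \<ge> 0 \<and>
        (\<forall>y z. \<bar>g y - g z\<bar> \<le> L * norm (y - z)) \<and>
        (\<forall>y. g y = g (y - (y \<bullet> e) *\<^sub>R e)) \<and>
        \<Omega> \<inter> ball x r = {y \<in> ball x r. y \<bullet> e < g y})"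

definition bounded_lipschitz_domain :: "'a::euclidean_space set \<Rightarrow> bool" where
  "bounded_lipschitz_domain \<Omega> \<longleftrightarrow>
     open \<Omega> \<and> connected \<Omega> \<and> \<Omega> \<noteq> {} \<and> bounded \<Omega> \<and> lipschitz_boundary \<Omega>"

definition zext :: "'a set \<Rightarrow> ('a \<Rightarrow> real) \<Rightarrow> 'a \<Rightarrow> real" where
  "zext \<Omega> u = (\<lambda>x. if x \<in> \<Omega> then u x else 0)"

text \<open>L^p(\<Omega>) membership (functions represented by arbitrary representatives on \<Omega>).\<close>
definition in_Lp :: "real \<Rightarrow> 'a::euclidean_space set \<Rightarrow> ('a \<Rightarrow> real) \<Rightarrow> bool" where
  "in_Lp p \<Omega> u \<longleftrightarrow> zext \<Omega> u \<in> borel_measurable lebesgue \<and>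
     (\<integral>\<^sup>+ x\<in>\<Omega>. ennreal (\<bar>u x\<bar> powr p) \<partial>lebesgue) < \<infinity>"

definition Lp_conv :: "real \<Rightarrow> 'a::euclidean_space set \<Rightarrow> (nat \<Rightarrow> 'a \<Rightarrow> real) \<Rightarrow> ('a \<Rightarrow> real) \<Rightarrow> bool" where
  "Lp_conv p \<Omega> uk u \<longleftrightarrow>
     ((\<lambda>k. \<integral>\<^sup>+ x\<in>\<Omega>. ennreal (\<bar>uk k x - u x\<bar> powr p) \<partial>lebesgue) \<longlongrightarrow> 0) sequentially"

text \<open>\<Omega>_\<delta> = \<Omega> \<union> \<partial>_\<delta>\<Omega> (for \<delta> > 0 this is the open \<delta>-neighbourhood of \<Omega>).\<close>
definition Omega_delta :: "'a::metric_space set \<Rightarrow> real \<Rightarrow> 'a set" where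
  "Omega_delta \<Omega> \<delta> = \<Omega> \<union> {y. y \<notin> \<Omega> \<and> (\<exists>x\<in>\<Omega>. dist x y < \<delta>)}"

definition J_delta :: "real \<Rightarrow> real \<Rightarrow> 'a::euclidean_space set \<Rightarrow> real \<Rightarrow> ('a \<Rightarrow> real) \<Rightarrow> ennreal" where
  "J_delta s p \<Omega> \<delta> u =
     (let v = zext \<Omega> u; D = Omega_delta \<Omega> \<delta> in
      \<integral>\<^sup>+ x\<in>D. (\<integral>\<^sup>+ y\<in>D \<inter> ball x \<delta>.
          ennreal (\<bar>v x - v y\<bar> powr p / norm (x - y) powr (real DIM('a) + s * p)) \<partial>lebesgue) \<partial>lebesgue)"

definition J_inf :: "real \<Rightarrow> real \<Rightarrow> 'a::euclidean_space set \<Rightarrow> ('a \<Rightarrow> real) \<Rightarrow> ennreal" where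
  "J_inf s p \<Omega> u =
     (let v = zext \<Omega> u in
      \<integral>\<^sup>+ x. (\<integral>\<^sup>+ y.
          ennreal (\<bar>v x - v y\<bar> powr p / norm (x - y) powr (real DIM('a) + s * p)) \<partial>lebesgue) \<partial>lebesgue)"

definition gamma_converges_at_top ::
  "(real \<Rightarrow> 'u \<Rightarrow> ennreal) \<Rightarrow> ('u \<Rightarrow> ennreal) \<Rightarrow> ('u \<Rightarrow> bool)
     \<Rightarrow> ((nat \<Rightarrow> 'u) \<Rightarrow> 'u \<Rightarrow> bool) \<Rightarrow> bool" where
  "gamma_converges_at_top J Jlim X conv \<longleftrightarrow>
     (\<forall>\<delta>::nat \<Rightarrow> real. filterlim \<delta> at_top sequentially \<longrightarrow>
        (\<forall>u. X u \<longrightarrow>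
           (\<forall>uk. (\<forall>k. X (uk k)) \<longrightarrow> conv uk u \<longrightarrow>
                 Jlim u \<le> liminf (\<lambda>k. J (\<delta> k) (uk k))) \<and>
           (\<exists>uk. (\<forall>k. X (uk k)) \<and> conv uk u \<and>
                 limsup (\<lambda>k. J (\<delta> k) (uk k)) \<le> Jlim u)))"

end

theory Submission
  imports Defs
begin

(* J_delta(u) integrates the same nonnegative kernel as J_inf(u) over a smaller set, so
   J_delta <= J_inf and the constant sequence is a recovery sequence.  For the liminf
   inequality, pass to a subsequence realising the liminf along which u_k -> u almost
   everywhere.  Since Omega_delta and the balls B(x, delta) exhaust R^N as delta -> infinity,
   the truncated integrands converge a.e. to the full one, and Fatou's lemma, applied in y
   and then in x, concludes. *)

lemma sigma_finite_lebesgue: "sigma_finite_measure (lebesgue :: 'a::euclidean_space measure)"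
proof
  show "\<exists>A::'a set set. countable A \<and> A \<subseteq> sets lebesgue \<and> \<Union>A = space lebesgue \<and>
          (\<forall>a\<in>A. emeasure lebesgue a \<noteq> \<infinity>)"
    by (intro exI[of _ "range (\<lambda>n::nat. box (- real n *\<^sub>R One) (real n *\<^sub>R One))"])
       (auto simp: emeasure_lborel_cbox_eq UN_box_eq_UNIV)
qed

lemma nn_integral_le_liminf_AE:
  assumes "\<And>k. f k \<in> borel_measurable M"
    and "AE x in M. g x \<le> liminf (\<lambda>k. f k x)"
  shows "(\<integral>\<^sup>+x. g x \<partial>M) \<le> liminf (\<lambda>k. \<integral>\<^sup>+x. f k x \<partial>M)"
proof -
  have "(\<integral>\<^sup>+x. g x \<partial>M) \<le> (\<integral>\<^sup>+x. liminf (\<lambda>k. f k x) \<partial>M)"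
    by (rule nn_integral_mono_AE[OF assms(2)])
  also have "\<dots> \<le> liminf (\<lambda>k. \<integral>\<^sup>+x. f k x \<partial>M)"
    by (rule nn_integral_liminf[OF assms(1)])
  finally show ?thesis .
qed

lemma nn_integral_tendsto_zero_AE_subseq:
  fixes f :: "nat \<Rightarrow> 'a \<Rightarrow> real"
  assumes [measurable]: "\<And>k. f k \<in> borel_measurable M"
    and nonneg: "\<And>k x. 0 \<le> f k x"
    and lim: "(\<lambda>k. \<integral>\<^sup>+x. f k x \<partial>M) \<longlonglongrightarrow> 0"
  shows "\<exists>r. strict_mono r \<and> (AE x in M. (\<lambda>n. f (r n) x) \<longlonglongrightarrow> 0)"
proof -
  have "\<forall>n. \<exists>N. \<forall>k\<ge>N. (\<integral>\<^sup>+x. f k x \<partial>M) < ennreal ((1/2)^n)"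
    using order_tendstoD(2)[OF lim] by (simp add: eventually_sequentially)
  then obtain N where N: "\<And>n k. N n \<le> k \<Longrightarrow> (\<integral>\<^sup>+x. f k x \<partial>M) < ennreal ((1/2)^n)"
    by metis
  define r where "r n = (\<Sum>i\<le>n. N i) + n" for n
  have "strict_mono r"
    by (simp add: strict_mono_Suc_iff r_def)
  have "N n \<le> r n" for n
    unfolding r_def using member_le_sum[of n "{..n}" N] by simp
  then have "(\<integral>\<^sup>+x. (\<Sum>n. ennreal (f (r n) x)) \<partial>M) \<le> (\<Sum>n. ennreal ((1/2)^n))"
    by (simp add: nn_integral_suminf suminf_le less_imp_le N)
  also have "\<dots> < \<infinity>"
    by (simp add: suminf_ennreal2 summable_geometric)
  finally have "AE x in M. (\<Sum>n. ennreal (f (r n) x)) \<noteq> \<infinity>"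
    by (intro nn_integral_PInf_AE) auto
  then have "AE x in M. (\<lambda>n. f (r n) x) \<longlonglongrightarrow> 0"
    by eventually_elim (use nonneg in \<open>auto intro: summable_LIMSEQ_zero summable_suminf_not_top\<close>)
  with \<open>strict_mono r\<close> show ?thesis by blast
qed

lemma Lp_tendsto_AE_subseq:
  fixes f :: "nat \<Rightarrow> 'a \<Rightarrow> real"
  assumes p: "0 < p" and [measurable]: "\<And>k. f k \<in> borel_measurable M" "g \<in> borel_measurable M"
    and lim: "(\<lambda>k. \<integral>\<^sup>+x. ennreal (\<bar>f k x - g x\<bar> powr p) \<partial>M) \<longlonglongrightarrow> 0"
  shows "\<exists>r. strict_mono r \<and> (AE x in M. (\<lambda>n. f (r n) x) \<longlonglongrightarrow> g x)"
proof -
  obtain r where "strict_mono r" and r: "AE x in M. (\<lambda>n. \<bar>f (r n) x - g x\<bar> powr p) \<longlonglongrightarrow> 0"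
    using nn_integral_tendsto_zero_AE_subseq[OF _ _ lim] by auto
  from r have "AE x in M. (\<lambda>n. f (r n) x) \<longlonglongrightarrow> g x"
  proof eventually_elim
    fix x assume "(\<lambda>n. \<bar>f (r n) x - g x\<bar> powr p) \<longlonglongrightarrow> 0"
    then have "(\<lambda>n. (\<bar>f (r n) x - g x\<bar> powr p) powr (1/p)) \<longlonglongrightarrow> 0"
      by (rule tendsto_zero_powrI[OF _ tendsto_const]) (use p in auto)
    then have "(\<lambda>n. \<bar>f (r n) x - g x\<bar>) \<longlonglongrightarrow> 0"
      using p by (simp add: powr_powr)
    then show "(\<lambda>n. f (r n) x) \<longlonglongrightarrow> g x"
      by (simp only: tendsto_rabs_zero_iff LIM_zero_iff)
  qed
  with \<open>strict_mono r\<close> show ?thesis by blast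
qed

lemma Lp_conv_AE_subseq:
  assumes "0 < p" "\<And>k. in_Lp p \<Omega> (uk k)" "in_Lp p \<Omega> u" "Lp_conv p \<Omega> uk u"
  shows "\<exists>r. strict_mono r \<and> (AE x in lebesgue. (\<lambda>n. zext \<Omega> (uk (r n)) x) \<longlonglongrightarrow> zext \<Omega> u x)"
proof (rule Lp_tendsto_AE_subseq)
  show "(\<lambda>k. \<integral>\<^sup>+x. ennreal (\<bar>zext \<Omega> (uk k) x - zext \<Omega> u x\<bar> powr p) \<partial>lebesgue) \<longlonglongrightarrow> 0"
  proof -
    have "(\<integral>\<^sup>+x\<in>\<Omega>. ennreal (\<bar>uk k x - u x\<bar> powr p) \<partial>lebesgue) =
          (\<integral>\<^sup>+x. ennreal (\<bar>zext \<Omega> (uk k) x - zext \<Omega> u x\<bar> powr p) \<partial>lebesgue)" for k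
      by (intro nn_integral_cong) (auto simp: zext_def indicator_def)
    with assms(4) show ?thesis
      by (simp add: Lp_conv_def)
  qed
qed (use assms in \<open>auto simp: in_Lp_def\<close>)

definition gagliardo_kernel :: "real \<Rightarrow> real \<Rightarrow> ('a::real_normed_vector \<Rightarrow> real) \<Rightarrow> 'a \<Rightarrow> 'a \<Rightarrow> ennreal" where
  "gagliardo_kernel p c v x y = ennreal (\<bar>v x - v y\<bar> powr p / norm (x - y) powr c)"

lemma gagliardo_kernel_measurable:
  fixes v :: "'a::euclidean_space \<Rightarrow> real"
  assumes [measurable]: "v \<in> borel_measurable lebesgue" "D \<in> sets lebesgue"
  shows "(\<lambda>(x, y). gagliardo_kernel p c v x y * indicator (D \<inter> ball x d) y)
           \<in> borel_measurable (lebesgue \<Otimes>\<^sub>M lebesgue)"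
proof -
  let ?M = "lebesgue \<Otimes>\<^sub>M lebesgue :: ('a \<times> 'a) measure"
  have id: "(\<lambda>x. x) \<in> borel_measurable (lebesgue :: 'a measure)"
    by (simp add: measurable_completion)
  have [measurable]: "fst \<in> borel_measurable ?M" "snd \<in> borel_measurable ?M"
    by (rule measurable_compose[OF measurable_fst id], rule measurable_compose[OF measurable_snd id])
  have [measurable]: "(\<lambda>z. v (fst z)) \<in> borel_measurable ?M" "(\<lambda>z. v (snd z)) \<in> borel_measurable ?M"
    "(\<lambda>z. indicator D (snd z) :: ennreal) \<in> borel_measurable ?M"
    by (auto intro: measurable_compose[OF measurable_fst] measurable_compose[OF measurable_snd])
  have "(\<lambda>z. gagliardo_kernel p c v (fst z) (snd z) * indicator D (snd z) *
              indicator {z \<in> space ?M. dist (fst z) (snd z) < d} z) \<in> borel_measurable ?M"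
    unfolding gagliardo_kernel_def by measurable
  then show ?thesis
    by (rule measurable_cong[THEN iffD1, rotated])
       (auto simp: indicator_def space_pair_measure)
qed

lemma gagliardo_kernel_tendsto:
  assumes "0 < p" "(\<lambda>k. v k x) \<longlonglongrightarrow> w x" "(\<lambda>k. v k y) \<longlonglongrightarrow> w y"
  shows "(\<lambda>k. gagliardo_kernel p c (v k) x y) \<longlonglongrightarrow> gagliardo_kernel p c w x y"
proof -
  have "(\<lambda>k. \<bar>v k x - v k y\<bar> powr p) \<longlonglongrightarrow> \<bar>w x - w y\<bar> powr p"
    using assms by (intro tendsto_powr' tendsto_rabs tendsto_diff tendsto_const) auto
  then show ?thesis
    unfolding gagliardo_kernel_def
    by (cases "norm (x - y) powr c = 0") (auto intro!: tendsto_ennrealI tendsto_divide)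
qed

lemma Omega_delta_eq: "Omega_delta \<Omega> d = \<Omega> \<union> (\<Union>x\<in>\<Omega>. ball x d)"
  by (auto simp: Omega_delta_def)

lemma Omega_delta_in_sets_lebesgue: "open \<Omega> \<Longrightarrow> Omega_delta \<Omega> d \<in> sets lebesgue"
  unfolding Omega_delta_eq
  by (intro sets_completionI_sets) (auto simp: sets_lborel intro!: borel_open open_Un open_UN)

lemma eventually_in_Omega_delta:
  assumes "\<Omega> \<noteq> {}" "filterlim \<delta> at_top sequentially"
  shows "eventually (\<lambda>k. x \<in> Omega_delta \<Omega> (\<delta> k)) sequentially"
proof -
  obtain a where "a \<in> \<Omega>" using assms(1) by auto
  have "eventually (\<lambda>k. dist a x < \<delta> k) sequentially"
    using assms(2) filterlim_at_top_dense by blast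
  then show ?thesis
    by eventually_elim (use \<open>a \<in> \<Omega>\<close> in \<open>auto simp: Omega_delta_def\<close>)
qed

lemma J_delta_le_J_inf: "J_delta s p \<Omega> d u \<le> J_inf s p \<Omega> u"
proof -
  have indicator_le: "(X::ennreal) * indicator A z \<le> X" for X A z
    by (simp add: indicator_def)
  show ?thesis
    unfolding J_delta_def J_inf_def Let_def
    by (intro nn_integral_mono order_trans[OF indicator_le] indicator_le)
qed

lemma J_inf_le_liminf_J_delta_AE:
  fixes uk :: "nat \<Rightarrow> 'a::euclidean_space \<Rightarrow> real" and \<delta> :: "nat \<Rightarrow> real"
  assumes \<Omega>: "open \<Omega>" "\<Omega> \<noteq> {}" and p: "0 < p"
    and \<delta>: "filterlim \<delta> at_top sequentially"
    and meas: "\<And>k. zext \<Omega> (uk k) \<in> borel_measurable lebesgue"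
    and ae: "AE x in lebesgue. (\<lambda>k. zext \<Omega> (uk k) x) \<longlonglongrightarrow> zext \<Omega> u x"
  shows "J_inf s p \<Omega> u \<le> liminf (\<lambda>k. J_delta s p \<Omega> (\<delta> k) (uk k))"
proof -
  define c where "c = real DIM('a) + s * p"
  define K where "K w x y = gagliardo_kernel p c (zext \<Omega> w) x y" for w x y
  define D where "D k = Omega_delta \<Omega> (\<delta> k)" for k
  define h where "h k x y = K (uk k) x y * indicator (D k \<inter> ball x (\<delta> k)) y" for k x y
  define g where "g k x = (\<integral>\<^sup>+y. h k x y \<partial>lebesgue) * indicator (D k) x" for k x
  have J_delta_eq: "J_delta s p \<Omega> (\<delta> k) (uk k) = (\<integral>\<^sup>+x. g k x \<partial>lebesgue)" for k
    by (simp add: J_delta_def Let_def g_def h_def K_def gagliardo_kernel_def D_def c_def)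
  have J_inf_eq: "J_inf s p \<Omega> u = (\<integral>\<^sup>+x. (\<integral>\<^sup>+y. K u x y \<partial>lebesgue) \<partial>lebesgue)"
    by (simp add: J_inf_def Let_def K_def gagliardo_kernel_def c_def)
  have D: "D k \<in> sets lebesgue" for k
    unfolding D_def using \<Omega>(1) by (rule Omega_delta_in_sets_lebesgue)
  have h_meas: "case_prod (h k) \<in> borel_measurable (lebesgue \<Otimes>\<^sub>M lebesgue)" for k
    unfolding h_def K_def using gagliardo_kernel_measurable[OF meas D] by simp
  have g_meas: "g k \<in> borel_measurable lebesgue" for k
    unfolding g_def using D
    by (intro borel_measurable_times_ennreal borel_measurable_indicator
        sigma_finite_measure.borel_measurable_nn_integral[OF sigma_finite_lebesgue h_meas])
  have kernel_le_liminf: "K u x y \<le> liminf (\<lambda>k. h k x y)"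
    if "(\<lambda>k. zext \<Omega> (uk k) x) \<longlonglongrightarrow> zext \<Omega> u x" "(\<lambda>k. zext \<Omega> (uk k) y) \<longlonglongrightarrow> zext \<Omega> u y" for x y
  proof -
    have "eventually (\<lambda>k. K (uk k) x y = h k x y) sequentially"
      using eventually_in_Omega_delta[OF \<Omega>(2) \<delta>, of y] filterlim_at_top_dense[THEN iffD1, OF \<delta>, rule_format, of "dist x y"]
      by (eventually_elim) (simp add: h_def D_def)
    then have "(\<lambda>k. h k x y) \<longlonglongrightarrow> K u x y"
      unfolding K_def using gagliardo_kernel_tendsto[OF p that] by (rule tendsto_cong[THEN iffD1])
    then show ?thesis
      by (simp add: lim_imp_Liminf)
  qed
  have "AE x in lebesgue. (\<integral>\<^sup>+y. K u x y \<partial>lebesgue) \<le> liminf (\<lambda>k. g k x)"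
    using ae
  proof eventually_elim
    fix x assume x: "(\<lambda>k. zext \<Omega> (uk k) x) \<longlonglongrightarrow> zext \<Omega> u x"
    have "eventually (\<lambda>k. (\<integral>\<^sup>+y. h k x y \<partial>lebesgue) = g k x) sequentially"
      using eventually_in_Omega_delta[OF \<Omega>(2) \<delta>, of x] by eventually_elim (simp add: g_def D_def)
    then have "liminf (\<lambda>k. \<integral>\<^sup>+y. h k x y \<partial>lebesgue) = liminf (\<lambda>k. g k x)"
      by (rule Liminf_eq)
    moreover have "(\<integral>\<^sup>+y. K u x y \<partial>lebesgue) \<le> liminf (\<lambda>k. \<integral>\<^sup>+y. h k x y \<partial>lebesgue)"
      using h_meas ae
      by (intro nn_integral_le_liminf_AE measurable_Pair2) (auto elim!: AE_mp intro!: kernel_le_liminf[OF x])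
    ultimately show "(\<integral>\<^sup>+y. K u x y \<partial>lebesgue) \<le> liminf (\<lambda>k. g k x)"
      by simp
  qed
  then show ?thesis
    unfolding J_inf_eq J_delta_eq by (rule nn_integral_le_liminf_AE[OF g_meas])
qed

lemma J_inf_le_liminf_J_delta:
  assumes \<Omega>: "open \<Omega>" "\<Omega> \<noteq> {}" and p: "0 < p"
    and \<delta>: "filterlim \<delta> at_top sequentially"
    and uk: "\<And>k. in_Lp p \<Omega> (uk k)" and u: "in_Lp p \<Omega> u" and conv: "Lp_conv p \<Omega> uk u"
  shows "J_inf s p \<Omega> u \<le> liminf (\<lambda>k. J_delta s p \<Omega> (\<delta> k) (uk k))"
proof -
  define L where "L = liminf (\<lambda>k. J_delta s p \<Omega> (\<delta> k) (uk k))"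
  obtain r1 where r1: "strict_mono r1" "(\<lambda>k. J_delta s p \<Omega> (\<delta> (r1 k)) (uk (r1 k))) \<longlonglongrightarrow> L"
    unfolding L_def using liminf_subseq_lim[of "\<lambda>k. J_delta s p \<Omega> (\<delta> k) (uk k)"]
    by (auto simp: o_def)
  have "Lp_conv p \<Omega> (\<lambda>k. uk (r1 k)) u"
    using LIMSEQ_subseq_LIMSEQ[OF conv[unfolded Lp_conv_def] r1(1)]
    unfolding Lp_conv_def by (simp add: o_def)
  then obtain r2 where r2: "strict_mono r2"
    "AE x in lebesgue. (\<lambda>n. zext \<Omega> (uk (r1 (r2 n))) x) \<longlonglongrightarrow> zext \<Omega> u x"
    using Lp_conv_AE_subseq[OF p uk u] by blast
  have "filterlim (\<lambda>n. \<delta> (r1 (r2 n))) at_top sequentially"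
    using filterlim_compose[OF \<delta> filterlim_subseq[OF strict_mono_o[OF r1(1) r2(1)]]]
    by (simp add: o_def)
  then have "J_inf s p \<Omega> u \<le> liminf (\<lambda>n. J_delta s p \<Omega> (\<delta> (r1 (r2 n))) (uk (r1 (r2 n))))"
    using uk by (intro J_inf_le_liminf_J_delta_AE[OF \<Omega> p _ _ r2(2)]) (auto simp: in_Lp_def)
  also have "\<dots> = L"
    using LIMSEQ_subseq_LIMSEQ[OF r1(2) r2(1)] by (simp add: o_def lim_imp_Liminf)
  finally show ?thesis
    unfolding L_def .
qed

theorem lemma5p1:
  fixes \<Omega> :: "'a::euclidean_space set" and s p :: real
  assumes "bounded_lipschitz_domain \<Omega>"
    and "0 < s" "s < 1" and "1 < p"
  shows "gamma_converges_at_top (J_delta s p \<Omega>) (J_inf s p \<Omega>) (in_Lp p \<Omega>) (Lp_conv p \<Omega>)"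
  unfolding gamma_converges_at_top_def
proof (intro allI impI conjI)
  fix \<delta> :: "nat \<Rightarrow> real" and u
  assume \<delta>: "filterlim \<delta> at_top sequentially" and u: "in_Lp p \<Omega> u"
  have \<Omega>: "open \<Omega>" "\<Omega> \<noteq> {}" and p: "0 < p"
    using assms(1,4) by (simp_all add: bounded_lipschitz_domain_def)
  show "J_inf s p \<Omega> u \<le> liminf (\<lambda>k. J_delta s p \<Omega> (\<delta> k) (uk k))"
    if "\<forall>k. in_Lp p \<Omega> (uk k)" "Lp_conv p \<Omega> uk u" for uk
    using J_inf_le_liminf_J_delta[OF \<Omega> p \<delta> _ u] that by blast
  have "limsup (\<lambda>k. J_delta s p \<Omega> (\<delta> k) u) \<le> J_inf s p \<Omega> u"
    by (intro Limsup_bounded always_eventually allI J_delta_le_J_inf)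
  then show "\<exists>uk. (\<forall>k. in_Lp p \<Omega> (uk k)) \<and> Lp_conv p \<Omega> uk u \<and>
               limsup (\<lambda>k. J_delta s p \<Omega> (\<delta> k) (uk k)) \<le> J_inf s p \<Omega> u"
    using u by (intro exI[of _ "\<lambda>_. u"]) (simp add: Lp_conv_def)
qed

end
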